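(* For every fixed $\alpha>1$ and $c>1$, $\mathrm{amls}(\alpha,c,x)$ is a continuous function of $x$ on the interval $(1,\infty)$.
   Context: Definition of amls: let $\mathcal{H}(x)=-x\ln x-(1-x)\ln(1-x)$ with $0\ln0=0$, $\mathcal{H}(0)=\mathcal{H}(1)=0$. For $\alpha,\beta,c\ge1$ define $\delta_{\alpha,\beta}(\kappa,\tau)=\frac{\frac{\beta}{\alpha}\kappa-\frac{\tau}{\alpha}}{1-\tau}$ if $\tau\ne1$ and $=\frac1\alpha$ if $\tau=1$; $\gamma_{\alpha,\beta}(\kappa,\tau)=(1-\frac\beta\alpha)\frac\kappa\tau+\frac1\alpha$ if $\tau\ne0$ and $=\frac1\alpha$ if $\tau=0$; $g_{\alpha,\beta,c}(\kappa,\tau)=\frac{\beta\kappa-\tau}{\alpha}\ln c-\tau\mathcal{H}(\gamma_{\alpha,\beta}(\kappa,\tau))-(1-\tau)\mathcal{H}(\delta_{\alpha,\beta}(\kappa,\tau))+\mathcal{H}(\kappa)$; $M_{\alpha,\beta}(\kappa)=\frac{\beta-\alpha}{1-\alpha\kappa}\kappa$ if $\alpha<\beta$, $0$ if $\alpha=\beta$, $\frac{\alpha-\beta}{\alpha-1}\kappa$ if $\alpha>\beta$. Then $\mathrm{amls}(\alpha,c,\beta)=\exp\left(\max_{0\le\kappa\le1/\beta}\ \min_{M_{\alpha,\beta}(\kappa)\le\tau\le\beta\kappa} g_{\alpha,\beta,c}(\kappa,\tau)\right)$. *)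

theory Defs
  imports "HOL-Analysis.Analysis"
begin

definition xlnx :: "real \<Rightarrow> real" where
  "xlnx x = (if x = 0 then 0 else x * ln x)"

definition Hent :: "real \<Rightarrow> real" where
  "Hent x = - xlnx x - xlnx (1 - x)"

definition delta_ab :: "real \<Rightarrow> real \<Rightarrow> real \<Rightarrow> real \<Rightarrow> real" where
  "delta_ab \<alpha> \<beta> \<kappa> \<tau> =
     (if \<tau> \<noteq> 1 then ((\<beta> / \<alpha>) * \<kappa> - \<tau> / \<alpha>) / (1 - \<tau>) else 1 / \<alpha>)"

definition gamma_ab :: "real \<Rightarrow> real \<Rightarrow> real \<Rightarrow> real \<Rightarrow> real" where
  "gamma_ab \<alpha> \<beta> \<kappa> \<tau> =
     (if \<tau> \<noteq> 0 then (1 - \<beta> / \<alpha>) * (\<kappa> / \<tau>) + 1 / \<alpha> else 1 / \<alpha>)"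

definition g_abc :: "real \<Rightarrow> real \<Rightarrow> real \<Rightarrow> real \<Rightarrow> real \<Rightarrow> real" where
  "g_abc \<alpha> \<beta> c \<kappa> \<tau> =
     (\<beta> * \<kappa> - \<tau>) / \<alpha> * ln c
     - \<tau> * Hent (gamma_ab \<alpha> \<beta> \<kappa> \<tau>)
     - (1 - \<tau>) * Hent (delta_ab \<alpha> \<beta> \<kappa> \<tau>)
     + Hent \<kappa>"

definition M_ab :: "real \<Rightarrow> real \<Rightarrow> real \<Rightarrow> real" where
  "M_ab \<alpha> \<beta> \<kappa> =
     (if \<alpha> < \<beta> then (\<beta> - \<alpha>) / (1 - \<alpha> * \<kappa>) * \<kappa>
      else if \<alpha> = \<beta> then 0
      else (\<alpha> - \<beta>) / (\<alpha> - 1) * \<kappa>)"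

text \<open>amls(alpha, c, beta); the max/min of the paper are rendered as SUP/INF
  (they coincide whenever the max/min are attained).\<close>
definition amls :: "real \<Rightarrow> real \<Rightarrow> real \<Rightarrow> real" where
  "amls \<alpha> c \<beta> =
     exp (SUP \<kappa>\<in>{0..1/\<beta>}.
            INF \<tau>\<in>{M_ab \<alpha> \<beta> \<kappa>..\<beta> * \<kappa>}. g_abc \<alpha> \<beta> c \<kappa> \<tau>)"

end

theory Submission
  imports Defs "HOL-Real_Asymp.Real_Asymp"
begin

(* Substituting kappa = s / beta makes the range s \<in> [0,1] of the outer supremum independent
  of beta, and the identity t H(a/t) = t ln t - a ln a - (t - a) ln (t - a) shows that g is a
  continuous function of all its arguments. An infimum or supremum over a fixed compact set of a
  jointly continuous function depends continuously on the parameters, so the only obstruction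
  is the lower end M(beta, s/beta) of the tau-interval [M, s]. It is continuous in (beta, s)
  except at the corner (alpha, 1), where the interval jumps from [0,1] (beta = alpha) to {1}
  (beta > alpha). There the infimum is squeezed between the infimum of g over all of [0,1] and
  the value of g at tau = s; both bounds are continuous and vanish at the corner, because
  g(alpha, 1/alpha, tau) = (1 - tau) ln c / alpha is nonnegative with minimum 0 at tau = 1. *)

lemma abs_cINF_diff_le:
  fixes f g :: "'a \<Rightarrow> real"
  assumes "T \<noteq> {}" "bdd_below (f ` T)" "bdd_below (g ` T)"
    and "\<And>t. t \<in> T \<Longrightarrow> \<bar>f t - g t\<bar> \<le> e"
  shows "\<bar>(INF t\<in>T. f t) - (INF t\<in>T. g t)\<bar> \<le> e"
proof -
  have shift: "(INF t\<in>T. u t) \<le> (INF t\<in>T. v t) + e"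
    if "bdd_below (u ` T)" "\<And>t. t \<in> T \<Longrightarrow> u t \<le> v t + e" for u v :: "'a \<Rightarrow> real"
  proof -
    have "(INF t\<in>T. u t) - e \<le> (INF t\<in>T. v t)"
    proof (rule cINF_greatest[OF \<open>T \<noteq> {}\<close>])
      fix t assume "t \<in> T"
      then show "(INF t\<in>T. u t) - e \<le> v t"
        using cINF_lower[OF that(1) \<open>t \<in> T\<close>] that(2)[of t] by linarith
    qed
    then show ?thesis
      by simp
  qed
  have "f t \<le> g t + e" "g t \<le> f t + e" if "t \<in> T" for t
    using assms(4)[OF that] by (simp_all add: abs_le_iff)
  with shift[of f g] shift[of g f] assms(2,3) show ?thesis
    by (simp add: abs_le_iff)
qed

lemma uniformly_continuous_on_cINF:
  fixes h :: "'a::metric_space \<times> 'b::metric_space \<Rightarrow> real"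
  assumes uc: "uniformly_continuous_on (S \<times> T) h" and "compact T" "T \<noteq> {}"
  shows "uniformly_continuous_on S (\<lambda>y. INF t\<in>T. h (y, t))"
  unfolding uniformly_continuous_on_def
proof (intro allI impI)
  fix e :: real
  assume "e > 0"
  then obtain d where "d > 0"
    and d: "\<And>p q. p \<in> S \<times> T \<Longrightarrow> q \<in> S \<times> T \<Longrightarrow> dist q p < d \<Longrightarrow> dist (h q) (h p) < e / 2"
    using uc unfolding uniformly_continuous_on_def by (metis half_gt_zero)
  have bdd: "bdd_below ((\<lambda>t. h (y, t)) ` T)" if "y \<in> S" for y
  proof -
    have "continuous_on T (\<lambda>t. h (y, t))"
      using that by (intro continuous_on_compose2[OF uniformly_continuous_imp_continuous[OF uc]])
        (auto intro!: continuous_intros)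
    then show ?thesis
      using \<open>compact T\<close> by (intro bounded_imp_bdd_below compact_imp_bounded compact_continuous_image)
  qed
  have "\<bar>(INF t\<in>T. h (y', t)) - (INF t\<in>T. h (y, t))\<bar> < e"
    if "y \<in> S" "y' \<in> S" "dist y' y < d" for y y'
  proof -
    have "\<bar>h (y', t) - h (y, t)\<bar> \<le> e / 2" if "t \<in> T" for t
      using d[of "(y, t)" "(y', t)"] \<open>y \<in> S\<close> \<open>y' \<in> S\<close> \<open>dist y' y < d\<close> that
      by (simp add: dist_Pair_Pair dist_real_def)
    then have "\<bar>(INF t\<in>T. h (y', t)) - (INF t\<in>T. h (y, t))\<bar> \<le> e / 2"
      by (rule abs_cINF_diff_le[OF \<open>T \<noteq> {}\<close> bdd[OF \<open>y' \<in> S\<close>] bdd[OF \<open>y \<in> S\<close>]])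
    then show ?thesis
      using \<open>e > 0\<close> by linarith
  qed
  then show "\<exists>d>0. \<forall>y\<in>S. \<forall>y'\<in>S. dist y' y < d \<longrightarrow>
      dist (INF t\<in>T. h (y', t)) (INF t\<in>T. h (y, t)) < e"
    using \<open>d > 0\<close> by (auto simp: dist_real_def)
qed

(* A convergent sequence together with its limit forms a compact set C, and h is uniformly
  continuous on C \<times> T. *)
lemma continuous_on_cINF:
  fixes h :: "'a::heine_borel \<times> 'b::metric_space \<Rightarrow> real"
  assumes h: "continuous_on (S \<times> T) h" and "compact T" "T \<noteq> {}"
  shows "continuous_on S (\<lambda>y. INF t\<in>T. h (y, t))"
  unfolding continuous_on_eq_continuous_within
proof
  fix y assume "y \<in> S"
  show "continuous (at y within S) (\<lambda>y. INF t\<in>T. h (y, t))"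
  proof (rule continuous_within_sequentiallyI)
    fix u assume "u \<longlonglongrightarrow> y" "\<forall>n. u n \<in> S"
    define C where "C = insert y (range u)"
    have "compact C"
      unfolding C_def by (rule compact_sequence_with_limit[OF \<open>u \<longlonglongrightarrow> y\<close>])
    have "C \<times> T \<subseteq> S \<times> T"
      using \<open>y \<in> S\<close> \<open>\<forall>n. u n \<in> S\<close> by (auto simp: C_def)
    then have "uniformly_continuous_on (C \<times> T) h"
      using compact_Times[OF \<open>compact C\<close> \<open>compact T\<close>]
      by (simp add: compact_uniformly_continuous continuous_on_subset[OF h])
    then have "continuous_on C (\<lambda>y. INF t\<in>T. h (y, t))"
      by (rule uniformly_continuous_imp_continuous[OF uniformly_continuous_on_cINF[OF _ \<open>compact T\<close> \<open>T \<noteq> {}\<close>]])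
    then have "continuous (at y within C) (\<lambda>y. INF t\<in>T. h (y, t))"
      using continuous_on_eq_continuous_within by (auto simp: C_def)
    moreover have "\<And>n. u n \<in> C"
      by (simp add: C_def)
    ultimately show "(\<lambda>n. INF t\<in>T. h (u n, t)) \<longlonglongrightarrow> (INF t\<in>T. h (y, t))"
      using \<open>u \<longlonglongrightarrow> y\<close> by (rule continuous_within_tendsto_compose')
  qed
qed

lemma continuous_on_cSUP:
  fixes h :: "'a::heine_borel \<times> 'b::metric_space \<Rightarrow> real"
  assumes h: "continuous_on (S \<times> T) h" and "compact T" "T \<noteq> {}"
  shows "continuous_on S (\<lambda>y. SUP t\<in>T. h (y, t))"
proof -
  have "continuous_on S (\<lambda>y. - (INF t\<in>T. - h (y, t)))"
    using assms by (intro continuous_intros continuous_on_cINF) auto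
  then show ?thesis
  proof (rule continuous_on_eq)
    fix y assume "y \<in> S"
    then have "continuous_on T (\<lambda>t. - h (y, t))"
      by (intro continuous_intros continuous_on_compose2[OF h]) (auto intro!: continuous_intros)
    then have "bdd_below ((\<lambda>t. - h (y, t)) ` T)"
      using \<open>compact T\<close> by (intro bounded_imp_bdd_below compact_imp_bounded compact_continuous_image)
    then show "- (INF t\<in>T. - h (y, t)) = (SUP t\<in>T. h (y, t))"
      using uminus_cINF[of "\<lambda>t. - h (y, t)"] \<open>T \<noteq> {}\<close> by simp
  qed
qed

lemma continuous_within_sandwich:
  fixes f l u :: "'a::t2_space \<Rightarrow> real"
  assumes "continuous (at x within S) l" "continuous (at x within S) u"
    and "\<And>y. y \<in> S \<Longrightarrow> l y \<le> f y \<and> f y \<le> u y" and "l x = f x" "u x = f x"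
  shows "continuous (at x within S) f"
proof -
  have "eventually (\<lambda>y. l y \<le> f y \<and> f y \<le> u y) (at x within S)"
    using assms(3) by (simp add: eventually_at_filter)
  then show ?thesis
    using assms unfolding continuous_within
    by (intro tendsto_sandwich[of l f _ u]) (auto elim: eventually_mono)
qed

lemma xlnx_eq: "xlnx x = x * ln x"
  by (simp add: xlnx_def)

(* Isabelle's ln satisfies ln 0 = 0 and ln (- x) = ln x, so xlnx x = x ln x is odd and continuous
  on the whole real line; this spares all sign side conditions below. *)
lemma isCont_xlnx: "isCont xlnx x"
proof (cases "x = 0")
  case True
  have right: "((\<lambda>y::real. y * ln y) \<longlongrightarrow> 0) (at_right 0)"
    by real_asymp
  have left: "((\<lambda>y::real. y * ln y) \<longlongrightarrow> 0) (at_left 0)"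
    using tendsto_minus[OF right] by (simp add: filterlim_at_left_to_right ln_minus)
  have "isCont (\<lambda>y::real. y * ln y) 0"
    using filterlim_split_at[OF left right] by (simp add: continuous_at)
  then show ?thesis
    using True by (simp add: xlnx_eq[abs_def])
next
  case False
  then show ?thesis
    by (simp add: xlnx_eq[abs_def] continuous_intros)
qed

lemma continuous_on_xlnx [continuous_intros]:
  "continuous_on S f \<Longrightarrow> continuous_on S (\<lambda>x. xlnx (f x))"
  by (rule continuous_on_compose2[of UNIV]) (auto intro: continuous_at_imp_continuous_on isCont_xlnx)

lemma mult_xlnx_divide: "t \<noteq> 0 \<Longrightarrow> t * xlnx (a / t) = xlnx a - a * ln t"
  by (cases "a = 0") (simp_all add: xlnx_eq ln_div algebra_simps)

lemma mult_Hent_divide: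
  "t * Hent (if t \<noteq> 0 then a / t else z) = xlnx t - xlnx a - xlnx (t - a)"
proof (cases "t = 0")
  case True
  then show ?thesis
    by (simp add: xlnx_eq ln_minus)
next
  case False
  then have complement: "1 - a / t = (t - a) / t"
    by (simp add: field_simps)
  have "t * Hent (a / t) = - (t * xlnx (a / t)) - t * xlnx ((t - a) / t)"
    unfolding Hent_def complement by (simp add: algebra_simps)
  also have "\<dots> = - (xlnx a - a * ln t) - (xlnx (t - a) - (t - a) * ln t)"
    by (simp only: mult_xlnx_divide[OF False])
  also have "\<dots> = xlnx t - xlnx a - xlnx (t - a)"
    by (simp add: xlnx_eq algebra_simps)
  finally show ?thesis
    using False by simp
qed

lemma g_abc_eq:
  assumes "\<alpha> \<noteq> 0"
  shows "g_abc \<alpha> \<beta> c \<kappa> \<tau> =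
    (\<beta> * \<kappa> - \<tau>) / \<alpha> * ln c
    - xlnx \<tau> + xlnx ((1 - \<beta> / \<alpha>) * \<kappa> + \<tau> / \<alpha>) + xlnx (\<tau> - ((1 - \<beta> / \<alpha>) * \<kappa> + \<tau> / \<alpha>))
    - xlnx (1 - \<tau>) + xlnx ((\<beta> * \<kappa> - \<tau>) / \<alpha>) + xlnx (1 - \<tau> - (\<beta> * \<kappa> - \<tau>) / \<alpha>)
    - xlnx \<kappa> - xlnx (1 - \<kappa>)"
proof -
  have "gamma_ab \<alpha> \<beta> \<kappa> \<tau> = (if \<tau> \<noteq> 0 then ((1 - \<beta> / \<alpha>) * \<kappa> + \<tau> / \<alpha>) / \<tau> else 1 / \<alpha>)"
    by (simp add: gamma_ab_def field_simps)
  moreover have "delta_ab \<alpha> \<beta> \<kappa> \<tau> = (if 1 - \<tau> \<noteq> 0 then ((\<beta> * \<kappa> - \<tau>) / \<alpha>) / (1 - \<tau>) else 1 / \<alpha>)"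
    by (simp add: delta_ab_def diff_divide_distrib)
  ultimately show ?thesis
    unfolding g_abc_def by (simp only: mult_Hent_divide) (simp add: Hent_def)
qed

lemma continuous_on_g_abc [continuous_intros]:
  assumes "\<alpha> \<noteq> 0" "continuous_on S b" "continuous_on S k" "continuous_on S t"
  shows "continuous_on S (\<lambda>x. g_abc \<alpha> (b x) c (k x) (t x))"
  unfolding g_abc_eq[OF \<open>\<alpha> \<noteq> 0\<close>] using assms by (intro continuous_intros) auto

lemma g_abc_beta_eq_alpha:
  assumes "\<alpha> \<noteq> 0"
  shows "g_abc \<alpha> \<alpha> c (1 / \<alpha>) \<tau> = (1 - \<tau>) / \<alpha> * ln c"
proof -
  have "gamma_ab \<alpha> \<alpha> (1 / \<alpha>) \<tau> = 1 / \<alpha>" "delta_ab \<alpha> \<alpha> (1 / \<alpha>) \<tau> = 1 / \<alpha>"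
    using assms by (simp_all add: gamma_ab_def delta_ab_def diff_divide_distrib[symmetric])
  with assms show ?thesis
    by (simp add: g_abc_def algebra_simps)
qed

lemma M_ab_bounds:
  assumes "\<alpha> > 1" "\<beta> \<ge> 1" "0 \<le> \<kappa>" "\<beta> * \<kappa> \<le> 1"
  shows "0 \<le> M_ab \<alpha> \<beta> \<kappa>" "M_ab \<alpha> \<beta> \<kappa> \<le> \<beta> * \<kappa>"
proof -
  consider "\<alpha> < \<beta>" "\<kappa> = 0" | "\<alpha> < \<beta>" "\<kappa> > 0" | "\<alpha> = \<beta>" | "\<beta> < \<alpha>"
    using assms(3) by linarith
  then have "0 \<le> M_ab \<alpha> \<beta> \<kappa> \<and> M_ab \<alpha> \<beta> \<kappa> \<le> \<beta> * \<kappa>"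
  proof cases
    case 2
    then have "\<alpha> * \<kappa> < 1"
      using assms(4) mult_strict_right_mono[of \<alpha> \<beta> \<kappa>] by linarith
    moreover have "(\<beta> - \<alpha>) * \<kappa> \<le> \<beta> * \<kappa> * (1 - \<alpha> * \<kappa>)"
      using mult_left_mono[OF assms(4), of "\<alpha> * \<kappa>"] 2 assms(1) by (simp add: algebra_simps)
    ultimately show ?thesis
      using 2 by (simp add: M_ab_def divide_le_eq)
  next
    case 4
    have "(\<alpha> - \<beta>) / (\<alpha> - 1) \<le> \<beta>"
      using assms(1,2) by (simp add: divide_le_eq algebra_simps)
    then have "(\<alpha> - \<beta>) / (\<alpha> - 1) * \<kappa> \<le> \<beta> * \<kappa>"
      using assms(3) by (rule mult_right_mono)
    then show ?thesis
      using 4 assms(1,3) by (simp add: M_ab_def)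
  qed (use assms in \<open>simp_all add: M_ab_def\<close>)
  then show "0 \<le> M_ab \<alpha> \<beta> \<kappa>" "M_ab \<alpha> \<beta> \<kappa> \<le> \<beta> * \<kappa>"
    by simp_all
qed

lemma continuous_on_M_ab:
  assumes "\<alpha> > 1"
  shows "continuous_on ({1<..} \<times> {0..1} - {(\<alpha>, 1)}) (\<lambda>p. M_ab \<alpha> (fst p) (snd p / fst p))"
proof -
  define D where "D = {1<..} \<times> {0..1} - {(\<alpha>, 1::real)}"
  have alpha_kappa_less_1: "\<alpha> * (s / \<beta>) < 1" if "(\<beta>, s) \<in> D" "\<alpha> \<le> \<beta>" for \<beta> s
  proof -
    have "\<alpha> * s < \<beta>"
    proof (cases "s < 1")
      case True
      then have "\<alpha> * s < \<alpha>"
        using assms by simp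
      then show ?thesis
        using that(2) by linarith
    next
      case False
      then show ?thesis
        using that by (auto simp: D_def)
    qed
    then show ?thesis
      using that by (simp add: D_def)
  qed
  have "continuous_on {p \<in> D. fst p \<le> \<alpha>} (\<lambda>p. (\<alpha> - fst p) / (\<alpha> - 1) * (snd p / fst p))"
    using assms by (intro continuous_intros) (auto simp: D_def)
  moreover have "continuous_on {p \<in> D. \<alpha> \<le> fst p}
      (\<lambda>p. (fst p - \<alpha>) / (1 - \<alpha> * (snd p / fst p)) * (snd p / fst p))"
    using alpha_kappa_less_1 by (intro continuous_intros) (auto simp: D_def)
  ultimately have "continuous_on D (\<lambda>p. if fst p \<le> \<alpha>
      then (\<alpha> - fst p) / (\<alpha> - 1) * (snd p / fst p)
      else (fst p - \<alpha>) / (1 - \<alpha> * (snd p / fst p)) * (snd p / fst p))"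
    by (rule continuous_on_cases_le) (auto intro: continuous_intros)
  then show ?thesis
    unfolding D_def by (rule continuous_on_eq) (auto simp: M_ab_def)
qed

definition amls_inf :: "real \<Rightarrow> real \<Rightarrow> real \<Rightarrow> real \<Rightarrow> real" where
  "amls_inf \<alpha> c \<beta> s = (INF \<tau>\<in>{M_ab \<alpha> \<beta> (s / \<beta>)..s}. g_abc \<alpha> \<beta> c (s / \<beta>) \<tau>)"

lemma amls_eq_exp_SUP:
  assumes "\<beta> > 0"
  shows "amls \<alpha> c \<beta> = exp (SUP s\<in>{0..1}. amls_inf \<alpha> c \<beta> s)"
proof -
  have range: "{0..1 / \<beta>} = (\<lambda>s. s / \<beta>) ` {0..1}"
    using assms by simp
  show ?thesis
    unfolding amls_def amls_inf_def range using assms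
    by (simp add: image_image del: image_divide_atLeastAtMost)
qed

lemma amls_inf_eq_INF_unit_interval:
  assumes "\<alpha> > 1" "\<beta> \<ge> 1" "s \<in> {0..1}"
  shows "amls_inf \<alpha> c \<beta> s =
    (INF t\<in>{0..1}. g_abc \<alpha> \<beta> c (s / \<beta>) (M_ab \<alpha> \<beta> (s / \<beta>) + t * (s - M_ab \<alpha> \<beta> (s / \<beta>))))"
proof -
  define m where "m = M_ab \<alpha> \<beta> (s / \<beta>)"
  have "m \<le> s"
    using M_ab_bounds(2)[of \<alpha> \<beta> "s / \<beta>"] assms by (simp add: m_def)
  then have "{m..s} = (\<lambda>t. (s - m) * t + m) ` {0..1}"
    by (simp add: image_affinity_atLeastAtMost)
  then show ?thesis
    unfolding amls_inf_def m_def[symmetric] by (simp add: image_image algebra_simps)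
qed

lemma continuous_on_amls_inf_punctured:
  assumes "\<alpha> > 1"
  shows "continuous_on ({1<..} \<times> {0..1} - {(\<alpha>, 1)}) (\<lambda>p. amls_inf \<alpha> c (fst p) (snd p))"
proof -
  define D where "D = {1<..} \<times> {0..1} - {(\<alpha>, 1::real)}"
  define m where "m p = M_ab \<alpha> (fst p) (snd p / fst p)" for p
  define H where "H q = g_abc \<alpha> (fst (fst q)) c (snd (fst q) / fst (fst q))
      (m (fst q) + snd q * (snd (fst q) - m (fst q)))" for q
  have "continuous_on D m"
    using continuous_on_M_ab[OF assms] by (simp add: D_def m_def[abs_def])
  then have "continuous_on (D \<times> {0..1}) (\<lambda>q. m (fst q))"
    by (rule continuous_on_compose2) (auto intro!: continuous_intros)
  then have "continuous_on (D \<times> {0..1}) H"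
    unfolding H_def using assms by (intro continuous_intros) (auto simp: D_def)
  then have "continuous_on D (\<lambda>p. INF t\<in>{0..1}. H (p, t))"
    by (rule continuous_on_cINF) auto
  then show ?thesis
    unfolding D_def by (rule continuous_on_eq)
      (use assms in \<open>auto simp: H_def m_def amls_inf_eq_INF_unit_interval\<close>)
qed

lemma amls_inf_bounds:
  assumes "\<alpha> > 1" "\<beta> > 1" "s \<in> {0..1}"
  shows "(INF \<tau>\<in>{0..1}. g_abc \<alpha> \<beta> c (s / \<beta>) \<tau>) \<le> amls_inf \<alpha> c \<beta> s"
    and "amls_inf \<alpha> c \<beta> s \<le> g_abc \<alpha> \<beta> c (s / \<beta>) s"
proof -
  let ?m = "M_ab \<alpha> \<beta> (s / \<beta>)"
  have m: "0 \<le> ?m" "?m \<le> s"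
    using M_ab_bounds[of \<alpha> \<beta> "s / \<beta>"] assms by auto
  then have sub: "{?m..s} \<subseteq> {0..1}"
    using assms(3) by auto
  have "continuous_on {0..1} (\<lambda>\<tau>. g_abc \<alpha> \<beta> c (s / \<beta>) \<tau>)"
    using assms(1) by (intro continuous_intros) auto
  then have bdd: "bdd_below (g_abc \<alpha> \<beta> c (s / \<beta>) ` {0..1})"
    by (intro bounded_imp_bdd_below compact_imp_bounded compact_continuous_image) auto
  show "(INF \<tau>\<in>{0..1}. g_abc \<alpha> \<beta> c (s / \<beta>) \<tau>) \<le> amls_inf \<alpha> c \<beta> s"
    unfolding amls_inf_def using m(2) bdd sub by (intro cINF_superset_mono) auto
  show "amls_inf \<alpha> c \<beta> s \<le> g_abc \<alpha> \<beta> c (s / \<beta>) s"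
    unfolding amls_inf_def using m(2) bdd_below_mono[OF bdd image_mono[OF sub]]
    by (intro cINF_lower) auto
qed

lemma amls_inf_alpha_1:
  assumes "\<alpha> > 1" "c \<ge> 1"
  shows "amls_inf \<alpha> c \<alpha> 1 = 0"
proof -
  have "amls_inf \<alpha> c \<alpha> 1 = (INF \<tau>\<in>{0..1}. (1 - \<tau>) / \<alpha> * ln c)"
    using assms(1) by (simp add: amls_inf_def M_ab_def g_abc_beta_eq_alpha)
  also have "\<dots> = 0"
  proof (rule antisym)
    have "bdd_below ((\<lambda>\<tau>. (1 - \<tau>) / \<alpha> * ln c) ` {0..1})"
      using assms by (intro bdd_belowI2[of _ 0]) auto
    then show "(INF \<tau>\<in>{0..1}. (1 - \<tau>) / \<alpha> * ln c) \<le> 0"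
      using cINF_lower[of "\<lambda>\<tau>. (1 - \<tau>) / \<alpha> * ln c" "{0..1}" 1] by simp
    show "0 \<le> (INF \<tau>\<in>{0..1}. (1 - \<tau>) / \<alpha> * ln c)"
      using assms by (intro cINF_greatest) auto
  qed
  finally show ?thesis .
qed

lemma continuous_on_amls_inf:
  assumes "\<alpha> > 1" "c \<ge> 1"
  shows "continuous_on ({1<..} \<times> {0..1}) (\<lambda>p. amls_inf \<alpha> c (fst p) (snd p))"
proof -
  define D where "D = {1::real<..} \<times> {0::real..1}"
  have "continuous (at p within D) (\<lambda>p. amls_inf \<alpha> c (fst p) (snd p))" if "p \<in> D" for p
  proof (cases "p = (\<alpha>, 1)")
    case True
    define L where "L q = (INF \<tau>\<in>{0..1}. g_abc \<alpha> (fst q) c (snd q / fst q) \<tau>)" for q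
    define U where "U q = g_abc \<alpha> (fst q) c (snd q / fst q) (snd q)" for q
    have "continuous_on (D \<times> {0..1})
        (\<lambda>r. g_abc \<alpha> (fst (fst r)) c (snd (fst r) / fst (fst r)) (snd r))"
      using assms(1) by (intro continuous_intros) (auto simp: D_def)
    from continuous_on_cINF[OF this compact_Icc] have "continuous_on D L"
      by (simp add: L_def[abs_def])
    moreover have "continuous_on D U"
      unfolding U_def[abs_def] using assms(1) by (intro continuous_intros) (auto simp: D_def)
    ultimately have "continuous (at p within D) L" "continuous (at p within D) U"
      using \<open>p \<in> D\<close> by (simp_all add: continuous_on_eq_continuous_within)
    then show ?thesis
    proof (rule continuous_within_sandwich)
      fix q assume "q \<in> D"
      then show "L q \<le> amls_inf \<alpha> c (fst q) (snd q) \<and> amls_inf \<alpha> c (fst q) (snd q) \<le> U q"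
        using assms(1) amls_inf_bounds[of \<alpha> "fst q" "snd q" c] by (auto simp: D_def L_def U_def)
    next
      show "L p = amls_inf \<alpha> c (fst p) (snd p)"
        using True by (simp add: L_def amls_inf_def M_ab_def)
      show "U p = amls_inf \<alpha> c (fst p) (snd p)"
        using True assms by (simp add: U_def g_abc_beta_eq_alpha amls_inf_alpha_1)
    qed
  next
    case False
    have "continuous (at p within D - {(\<alpha>, 1)}) (\<lambda>p. amls_inf \<alpha> c (fst p) (snd p))"
      using continuous_on_amls_inf_punctured[OF assms(1)] \<open>p \<in> D\<close> False
      by (simp add: continuous_on_eq_continuous_within D_def)
    moreover have "at p within D = at p within D - {(\<alpha>, 1)}"
      using False by (intro at_within_nhd[of p "- {(\<alpha>, 1)}"]) auto
    ultimately show ?thesis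
      by simp
  qed
  then show ?thesis
    by (simp add: continuous_on_eq_continuous_within D_def)
qed

theorem lemma5p6:
  fixes \<alpha> c :: real
  assumes "\<alpha> > 1" and "c > 1"
  shows "continuous_on {1<..} (\<lambda>x. amls \<alpha> c x)"
proof -
  have "continuous_on {1<..} (\<lambda>\<beta>. SUP s\<in>{0..1}. amls_inf \<alpha> c \<beta> s)"
    using continuous_on_cSUP[OF continuous_on_amls_inf] assms by simp
  then have "continuous_on {1<..} (\<lambda>\<beta>. exp (SUP s\<in>{0..1}. amls_inf \<alpha> c \<beta> s))"
    by (rule continuous_on_exp)
  then show ?thesis
    by (rule continuous_on_eq) (simp add: amls_eq_exp_SUP)
qed

end
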